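(* Let $G$ be a finite simple graph with a perfect matching $M$, let $\mathcal{C}$ be an optimal edge $2$-colouring of $G$, and let $\mathcal{F}$, $P$, $\mathcal{C}_M$, $P_j,D_j,U_j,V_j,S_j$ and the sets $\mathcal{H},\mathcal{L}$ be as in the context. Then: (a) $|S_j|\ge |P_j|+1$ for all $j\in\mathcal{C}_M$; (b) $\mathrm{rp}(S_j)\ge (|P_j|-1)/2$ for all $j\in\mathcal{C}_M$; (c) if $D_j\ne\emptyset$ then $j\in\mathcal{H}$; (d) for $j\in\mathcal{L}$, every vertex of $S_j$ has its $M$-partner also in $S_j$; furthermore $S_j$ has a unique maximum element $v^\ast$ with respect to $\preceq_{\mathcal{F}}$; (e) $|S_j|\ge 4$ for every $j\in\mathcal{L}$.
   Context: $G\setminus M$ is the spanning subgraph with edge set $E(G)\setminus M$, with connected components $C_1,\dots,C_h$. An edge $2$-colouring assigns colours to edges (not necessarily properly) so that each vertex sees at most $2$ distinct colours; optimal means maximum number of colours. $\mathrm{mcl}(u)$ is the colour of the $M$-edge at $u$; $\mathcal{C}_M$ is the set of colours used on $M$ (matching colours) and $\mathcal{C}_N$ the remaining colours (non-matching colours). For a colour $i$, $G[i]$ is the subgraph spanned by the edges of colour $i$; for $i\in\mathcal{C}_N$ it is called a non-matching colour component, and $k_m$ denotes the number of non-matching colour components contained in $C_m$. Forests: rooted trees, $r(F)$ roots, $l(F)$ leaves (non-root vertices with no children); each tree has a depth-first indexing $\mathrm{dfs}_T$ (descendants get larger indices) and order $u\preceq_T v$ iff $\mathrm{dfs}_T(u)\ge\mathrm{dfs}_T(v)$;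 in a forest, vertices of different trees are incomparable. $(T_1,T_2)$ is a cascading pair if they are vertex-disjoint or $r(T_2)\in l(T_1)$ and $|V(T_1)\cap V(T_2)|=1$; $\mathcal{F}=\{F_1,\dots,F_l\}$ is a cascading sequence of forests if $V(F_i)\cap V(F_j)=\emptyset$ for $|i-j|\ge2$ and every tree of $F_i$ with every tree of $F_{i+1}$ forms a cascading pair. $V(\mathcal{F})=\bigcup_F V(F)$; an internal vertex of $\mathcal{F}$ is a vertex of some $F\in\mathcal{F}$ that is neither a root nor a leaf of $F$, and $\mathrm{Int}(\mathcal{F})$ is the set of these. $\preceq_{\mathcal{F}}$ is the transitive closure of "$x\preceq_F y$ for some $F\in\mathcal{F}$"; $x\mathcal{F}y$ is the path $xFy$ in the forest $F\in\mathcal{F}$ containing an $x$–$y$ path. Standing data: $\mathcal{F}$ is a cascading sequence of forests in $G\setminus M$ with $\sum_{F\in\mathcal{F}}|l(F)|=\sum_{m=1}^h(k_m-1)$, with $\mathrm{Int}(\mathcal{F})\cap V(H)=\emptyset$ for every non-matching colour component $H$, and such that for each $F\in\mathcal{F}$ and $u\in r(F)\cup l(F)$ every edge of $F$ at $u$ has colour $\mathrm{mcl}(u)$. $P=\{(u_i,v_i)\}$ is a set of $\sum_{m}(k_m-1)$ pairs of vertices of $V(\mathcal{F})$ such that: (a) the $u_i$ are pairwise distinct; (b) $u_i\prec_{\mathcal{F}}v_i$ and the path $u_i\mathcal{F}v_i$ exists; (c) $\mathrm{mcl}(u_i)=\mathrm{mcl}(v_i)$; (d) $u_i\mathcal{F}v_i$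 is monochromatic of colour $\mathrm{mcl}(u_i)$; (e) every internal vertex $z$ of $u_i\mathcal{F}v_i$ has $\mathrm{mcl}(z)\ne\mathrm{mcl}(u_i)$; (f) for $i\ne j$ with $u_iv_i,u_jv_j\in M$ the paths $u_i\mathcal{F}v_i,u_j\mathcal{F}v_j$ share no internal vertex. For $j\in\mathcal{C}_M$: $P_j=\{(u,v)\in P:\mathrm{mcl}(u)=\mathrm{mcl}(v)=j\}$; $D_j=\{(u,v)\in P_j: uv\in M\}$ (denoted $C_j$ in the paper); $U_j$, $V_j$ are the sets of first and second coordinates of pairs in $P_j$; $S_j=U_j\cup V_j$. For an $M$-monochromatic set $S$ (all $M$-edges at vertices of $S$ have the same colour), $\mathrm{rp}(S)=i(S;M)-1$ where $i(S;M)$ is the number of $M$-edges incident with $S$. A colour $j\in\mathcal{C}_M$ is high ($j\in\mathcal{H}$) if $\mathrm{rp}(S_j)\ge(|P_j|-|D_j|)/2$, and low ($j\in\mathcal{L}$) otherwise. *)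

theory Defs
  imports Complex_Main
begin

definition simple_graph :: "'v set \<Rightarrow> 'v set set \<Rightarrow> bool" where
  "simple_graph V E \<longleftrightarrow> finite V \<and> (\<forall>e\<in>E. e \<subseteq> V \<and> card e = 2)"

definition perfect_matching :: "'v set \<Rightarrow> 'v set set \<Rightarrow> 'v set set \<Rightarrow> bool" where
  "perfect_matching V E M \<longleftrightarrow> M \<subseteq> E \<and> (\<forall>v\<in>V. \<exists>!e. e \<in> M \<and> v \<in> e)"

definition edge_2_colouring :: "'v set \<Rightarrow> 'v set set \<Rightarrow> ('v set \<Rightarrow> nat) \<Rightarrow> bool" where
  "edge_2_colouring V E col \<longleftrightarrow> (\<forall>v\<in>V. card (col ` {e\<in>E. v \<in> e}) \<le> 2)"

definition optimal_2_colouring :: "'v set \<Rightarrow> 'v set set \<Rightarrow> ('v set \<Rightarrow> nat) \<Rightarrow> bool" where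
  "optimal_2_colouring V E col \<longleftrightarrow> edge_2_colouring V E col \<and>
     (\<forall>col'. edge_2_colouring V E col' \<longrightarrow> card (col' ` E) \<le> card (col ` E))"

definition mcl :: "'v set set \<Rightarrow> ('v set \<Rightarrow> nat) \<Rightarrow> 'v \<Rightarrow> nat" where
  "mcl M col u = col (THE e. e \<in> M \<and> u \<in> e)"

definition matching_colours :: "'v set set \<Rightarrow> ('v set \<Rightarrow> nat) \<Rightarrow> nat set" where
  "matching_colours M col = col ` M"

definition nonmatching_colours :: "'v set set \<Rightarrow> 'v set set \<Rightarrow> ('v set \<Rightarrow> nat) \<Rightarrow> nat set" where
  "nonmatching_colours E M col = col ` E - col ` M"

definition colour_verts :: "'v set set \<Rightarrow> ('v set \<Rightarrow> nat) \<Rightarrow> nat \<Rightarrow> 'v set" where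
  "colour_verts E col i = \<Union> {e\<in>E. col e = i}"

definition adj_minus :: "'v set set \<Rightarrow> 'v set set \<Rightarrow> 'v \<Rightarrow> 'v \<Rightarrow> bool" where
  "adj_minus E M x y \<longleftrightarrow> {x, y} \<in> E - M"

definition comp_of :: "'v set \<Rightarrow> 'v set set \<Rightarrow> 'v set set \<Rightarrow> 'v \<Rightarrow> 'v set" where
  "comp_of V E M v = {w\<in>V. (adj_minus E M)\<^sup>*\<^sup>* v w}"

definition components_minus :: "'v set \<Rightarrow> 'v set set \<Rightarrow> 'v set set \<Rightarrow> 'v set set" where
  "components_minus V E M = comp_of V E M ` V"

definition kcount :: "'v set set \<Rightarrow> 'v set set \<Rightarrow> ('v set \<Rightarrow> nat) \<Rightarrow> 'v set \<Rightarrow> nat" where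
  "kcount E M col C = card {i \<in> nonmatching_colours E M col. colour_verts E col i \<subseteq> C}"

definition excess :: "'v set \<Rightarrow> 'v set set \<Rightarrow> 'v set set \<Rightarrow> ('v set \<Rightarrow> nat) \<Rightarrow> int" where
  "excess V E M col = (\<Sum>C\<in>components_minus V E M. int (kcount E M col C) - 1)"

text \<open>A rooted forest is given by its vertex set, a parent function (roots have no parent)
  and an indexing of the vertices (one depth-first indexing per tree).\<close>
record 'v rforest =
  fverts :: "'v set"
  fpar :: "'v \<Rightarrow> 'v option"
  fdfs :: "'v \<Rightarrow> nat"

definition fstep :: "'v rforest \<Rightarrow> 'v \<Rightarrow> 'v \<Rightarrow> bool" where
  "fstep F x y \<longleftrightarrow> x \<in> fverts F \<and> fpar F x = Some y"

text \<open>anc F x y: y is an ancestor of x (reflexive), i.e. x is a descendant of y.\<close>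
definition anc :: "'v rforest \<Rightarrow> 'v \<Rightarrow> 'v \<Rightarrow> bool" where
  "anc F x y \<longleftrightarrow> x \<in> fverts F \<and> (fstep F)\<^sup>*\<^sup>* x y"

definition froots :: "'v rforest \<Rightarrow> 'v set" where
  "froots F = {r\<in>fverts F. fpar F r = None}"

definition fleaves :: "'v rforest \<Rightarrow> 'v set" where
  "fleaves F = {v\<in>fverts F. fpar F v \<noteq> None \<and> \<not> (\<exists>w\<in>fverts F. fpar F w = Some v)}"

definition fedges :: "'v rforest \<Rightarrow> 'v set set" where
  "fedges F = {{v, p} |v p. v \<in> fverts F \<and> fpar F v = Some p}"

definition same_tree :: "'v rforest \<Rightarrow> 'v \<Rightarrow> 'v \<Rightarrow> bool" where
  "same_tree F x y \<longleftrightarrow> x \<in> fverts F \<and> y \<in> fverts F \<and> (\<exists>w. anc F x w \<and> anc F y w)"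

definition tree_verts :: "'v rforest \<Rightarrow> 'v \<Rightarrow> 'v set" where
  "tree_verts F r = {v\<in>fverts F. anc F v r}"

definition descendants :: "'v rforest \<Rightarrow> 'v \<Rightarrow> 'v set" where
  "descendants F v = {w\<in>fverts F. anc F w v}"

text \<open>F is a rooted forest in G \ M whose indexing is a depth-first indexing on each tree
  (injective on each tree, and the descendants of every vertex v are exactly the vertices
  of its tree whose index lies in the interval starting at the index of v of length the
  number of descendants; in particular descendants get larger indices).\<close>
definition forest_in :: "'v set \<Rightarrow> 'v set set \<Rightarrow> 'v set set \<Rightarrow> 'v rforest \<Rightarrow> bool" where
  "forest_in V E M F \<longleftrightarrow>
     finite (fverts F) \<and> fverts F \<subseteq> V \<and>
     (\<forall>v\<in>fverts F. \<forall>p. fpar F v = Some p \<longrightarrow> p \<in> fverts F \<and> {v, p} \<in> E - M) \<and>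
     (\<forall>v\<in>fverts F. \<exists>r. anc F v r \<and> fpar F r = None) \<and>
     (\<forall>r\<in>froots F. inj_on (fdfs F) (tree_verts F r)) \<and>
     (\<forall>v\<in>fverts F. descendants F v =
        {w\<in>fverts F. same_tree F w v \<and> fdfs F v \<le> fdfs F w \<and>
                      fdfs F w < fdfs F v + card (descendants F v)})"

definition fle :: "'v rforest \<Rightarrow> 'v \<Rightarrow> 'v \<Rightarrow> bool" where
  "fle F u v \<longleftrightarrow> same_tree F u v \<and> fdfs F u \<ge> fdfs F v"

definition cascading_pair :: "'v rforest \<Rightarrow> 'v \<Rightarrow> 'v rforest \<Rightarrow> 'v \<Rightarrow> bool" where
  "cascading_pair F1 r1 F2 r2 \<longleftrightarrow>
     tree_verts F1 r1 \<inter> tree_verts F2 r2 = {} \<or>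
     (r2 \<in> fleaves F1 \<inter> tree_verts F1 r1 \<and> card (tree_verts F1 r1 \<inter> tree_verts F2 r2) = 1)"

definition cascading_seq :: "'v rforest list \<Rightarrow> bool" where
  "cascading_seq Fs \<longleftrightarrow>
     (\<forall>i<length Fs. \<forall>j<length Fs. i + 2 \<le> j \<longrightarrow> fverts (Fs ! i) \<inter> fverts (Fs ! j) = {}) \<and>
     (\<forall>i. Suc i < length Fs \<longrightarrow>
        (\<forall>r1\<in>froots (Fs ! i). \<forall>r2\<in>froots (Fs ! Suc i). cascading_pair (Fs ! i) r1 (Fs ! Suc i) r2))"

definition seq_verts :: "'v rforest list \<Rightarrow> 'v set" where
  "seq_verts Fs = (\<Union>F\<in>set Fs. fverts F)"

definition seq_internal :: "'v rforest list \<Rightarrow> 'v set" where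
  "seq_internal Fs = (\<Union>F\<in>set Fs. fverts F - froots F - fleaves F)"

definition seq_le :: "'v rforest list \<Rightarrow> 'v \<Rightarrow> 'v \<Rightarrow> bool" where
  "seq_le Fs = (\<lambda>x y. \<exists>F\<in>set Fs. fle F x y)\<^sup>+\<^sup>+"

definition seq_less :: "'v rforest list \<Rightarrow> 'v \<Rightarrow> 'v \<Rightarrow> bool" where
  "seq_less Fs x y \<longleftrightarrow> seq_le Fs x y \<and> x \<noteq> y"

text \<open>Edges of the x--y path in the tree of F containing x and y: the edge from w to its
  parent lies on the path iff exactly one of x, y is a descendant of w.\<close>
definition tree_path_edges :: "'v rforest \<Rightarrow> 'v \<Rightarrow> 'v \<Rightarrow> 'v set set" where
  "tree_path_edges F x y =
     {{w, p} |w p. w \<in> fverts F \<and> fpar F w = Some p \<and> (anc F x w \<noteq> anc F y w)}"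

definition seq_path_exists :: "'v rforest list \<Rightarrow> 'v \<Rightarrow> 'v \<Rightarrow> bool" where
  "seq_path_exists Fs x y \<longleftrightarrow> (\<exists>F\<in>set Fs. same_tree F x y)"

definition seq_path_edges :: "'v rforest list \<Rightarrow> 'v \<Rightarrow> 'v \<Rightarrow> 'v set set" where
  "seq_path_edges Fs x y = (\<Union>F\<in>{F\<in>set Fs. same_tree F x y}. tree_path_edges F x y)"

definition seq_path_internal :: "'v rforest list \<Rightarrow> 'v \<Rightarrow> 'v \<Rightarrow> 'v set" where
  "seq_path_internal Fs x y = \<Union> (seq_path_edges Fs x y) - {x, y}"

definition Pj :: "'v set set \<Rightarrow> ('v set \<Rightarrow> nat) \<Rightarrow> ('v \<times> 'v) set \<Rightarrow> nat \<Rightarrow> ('v \<times> 'v) set" where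
  "Pj M col P j = {(u, v)\<in>P. mcl M col u = j \<and> mcl M col v = j}"

definition Dj :: "'v set set \<Rightarrow> ('v set \<Rightarrow> nat) \<Rightarrow> ('v \<times> 'v) set \<Rightarrow> nat \<Rightarrow> ('v \<times> 'v) set" where
  "Dj M col P j = {(u, v)\<in>Pj M col P j. {u, v} \<in> M}"

definition Uj :: "'v set set \<Rightarrow> ('v set \<Rightarrow> nat) \<Rightarrow> ('v \<times> 'v) set \<Rightarrow> nat \<Rightarrow> 'v set" where
  "Uj M col P j = fst ` Pj M col P j"

definition Vj :: "'v set set \<Rightarrow> ('v set \<Rightarrow> nat) \<Rightarrow> ('v \<times> 'v) set \<Rightarrow> nat \<Rightarrow> 'v set" where
  "Vj M col P j = snd ` Pj M col P j"

definition Sj :: "'v set set \<Rightarrow> ('v set \<Rightarrow> nat) \<Rightarrow> ('v \<times> 'v) set \<Rightarrow> nat \<Rightarrow> 'v set" where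
  "Sj M col P j = Uj M col P j \<union> Vj M col P j"

definition rp :: "'v set set \<Rightarrow> 'v set \<Rightarrow> int" where
  "rp M S = int (card {e\<in>M. e \<inter> S \<noteq> {}}) - 1"

definition high :: "'v set set \<Rightarrow> ('v set \<Rightarrow> nat) \<Rightarrow> ('v \<times> 'v) set \<Rightarrow> nat \<Rightarrow> bool" where
  "high M col P j \<longleftrightarrow> j \<in> matching_colours M col \<and>
     real_of_int (rp M (Sj M col P j)) \<ge>
       (real (card (Pj M col P j)) - real (card (Dj M col P j))) / 2"

definition low :: "'v set set \<Rightarrow> ('v set \<Rightarrow> nat) \<Rightarrow> ('v \<times> 'v) set \<Rightarrow> nat \<Rightarrow> bool" where
  "low M col P j \<longleftrightarrow> j \<in> matching_colours M col \<and> \<not> high M col P j"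

definition good_forest_seq ::
  "'v set \<Rightarrow> 'v set set \<Rightarrow> 'v set set \<Rightarrow> ('v set \<Rightarrow> nat) \<Rightarrow> 'v rforest list \<Rightarrow> bool" where
  "good_forest_seq V E M col Fs \<longleftrightarrow>
     (\<forall>F\<in>set Fs. forest_in V E M F) \<and> cascading_seq Fs \<and>
     int (sum_list (map (\<lambda>F. card (fleaves F)) Fs)) = excess V E M col \<and>
     (\<forall>i\<in>nonmatching_colours E M col. seq_internal Fs \<inter> colour_verts E col i = {}) \<and>
     (\<forall>F\<in>set Fs. \<forall>u\<in>froots F \<union> fleaves F. \<forall>e\<in>fedges F. u \<in> e \<longrightarrow> col e = mcl M col u)"

definition good_pairs ::
  "'v set \<Rightarrow> 'v set set \<Rightarrow> 'v set set \<Rightarrow> ('v set \<Rightarrow> nat) \<Rightarrow> 'v rforest list \<Rightarrow> ('v \<times> 'v) set \<Rightarrow> bool" where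
  "good_pairs V E M col Fs P \<longleftrightarrow>
     finite P \<and> int (card P) = excess V E M col \<and>
     (\<forall>(u, v)\<in>P. u \<in> seq_verts Fs \<and> v \<in> seq_verts Fs) \<and>
     inj_on fst P \<and>
     (\<forall>(u, v)\<in>P. seq_less Fs u v \<and> seq_path_exists Fs u v) \<and>
     (\<forall>(u, v)\<in>P. mcl M col u = mcl M col v) \<and>
     (\<forall>(u, v)\<in>P. \<forall>e\<in>seq_path_edges Fs u v. col e = mcl M col u) \<and>
     (\<forall>(u, v)\<in>P. \<forall>z\<in>seq_path_internal Fs u v. mcl M col z \<noteq> mcl M col u) \<and>
     (\<forall>(u, v)\<in>P. \<forall>(u', v')\<in>P. (u, v) \<noteq> (u', v') \<and> {u, v} \<in> M \<and> {u', v'} \<in> M \<longrightarrow>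
        seq_path_internal Fs u v \<inter> seq_path_internal Fs u' v' = {})"

end

theory Submission
  imports Defs "HOL-Library.Product_Lexorder"
begin

(* Give every vertex of the cascading sequence the rank (index of the first forest containing
   it, its dfs index there), ordered lexicographically.  Since two consecutive forests share
   only roots of trees of the later one, the rank strictly decreases along x \<prec>_F y; so
   \<preceq>_F is antisymmetric and, starting anywhere in S_j and following pairs (u, v) of P_j,
   one ends in V_j - U_j.  Hence |S_j| > |U_j| = |P_j|, which is (a).  Each M-edge meets S_j
   in at most two vertices, so |S_j| \<le> 2 (rp(S_j) + 1), giving (b) and then (c).  For a low
   colour both estimates are tight: D_j is empty, S_j is a union of M-edges, and V_j - U_j is a
   single vertex v*, which every vertex of S_j reaches by following pairs, so v* is the maximum
   (d).  Finally |S_j| is even, and |S_j| = 2 would make the only pair an M-edge, contradicting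
   D_j = {} (e). *)

section \<open>Rooted forests\<close>

lemma forest_in_subset: "forest_in V E M F \<Longrightarrow> fverts F \<subseteq> V"
  unfolding forest_in_def by (elim conjE)

lemma forest_in_parent:
  assumes "forest_in V E M F" "v \<in> fverts F" "fpar F v = Some p"
  shows "p \<in> fverts F"
  using assms(1)[unfolded forest_in_def, THEN conjunct2, THEN conjunct2, THEN conjunct1] assms(2,3)
  by blast

lemma forest_in_has_root:
  assumes "forest_in V E M F" "v \<in> fverts F"
  obtains r where "anc F v r" "fpar F r = None"
  using assms(1)[unfolded forest_in_def, THEN conjunct2, THEN conjunct2, THEN conjunct2,
      THEN conjunct1] assms(2)
  by blast

lemma forest_in_dfs_inj:
  assumes "forest_in V E M F" "r \<in> froots F"
  shows "inj_on (fdfs F) (tree_verts F r)"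
  using assms(1)[unfolded forest_in_def, THEN conjunct2, THEN conjunct2, THEN conjunct2,
      THEN conjunct2, THEN conjunct1] assms(2)
  by blast

lemma forest_in_dfs_descendant:
  assumes "forest_in V E M F" "v \<in> fverts F" "w \<in> descendants F v"
  shows "fdfs F v \<le> fdfs F w"
proof -
  have "descendants F v = {w\<in>fverts F. same_tree F w v \<and> fdfs F v \<le> fdfs F w \<and>
      fdfs F w < fdfs F v + card (descendants F v)}"
    using assms(1)[unfolded forest_in_def, THEN conjunct2, THEN conjunct2, THEN conjunct2,
        THEN conjunct2, THEN conjunct2] assms(2)
    by (rule bspec)
  then show ?thesis
    using assms(3) by (metis (no_types, lifting) mem_Collect_eq)
qed

lemma anc_trans: "anc F x w \<Longrightarrow> anc F w r \<Longrightarrow> anc F x r"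
  unfolding anc_def by (blast intro: rtranclp_trans)

lemma anc_in_fverts:
  assumes F: "forest_in V E M F" and "anc F x w"
  shows "w \<in> fverts F"
proof -
  have "(fstep F)\<^sup>*\<^sup>* x w" "x \<in> fverts F"
    using assms(2) unfolding anc_def by auto
  then show ?thesis
  proof (induction rule: rtranclp_induct)
    case (step y z)
    then show ?case
      using forest_in_parent[OF F] unfolding fstep_def by blast
  qed
qed

lemma anc_root:
  assumes F: "forest_in V E M F" and "x \<in> fverts F"
  obtains r where "r \<in> froots F" "anc F x r"
proof -
  obtain r where r: "anc F x r" "fpar F r = None"
    using forest_in_has_root[OF assms] .
  have "r \<in> froots F"
    using r anc_in_fverts[OF F r(1)] unfolding froots_def by blast
  with r show ?thesis
    using that by blast
qed

lemma same_tree_common_root: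
  assumes F: "forest_in V E M F" and "same_tree F x y"
  obtains r where "r \<in> froots F" "anc F x r" "anc F y r"
proof -
  obtain w where w: "anc F x w" "anc F y w"
    using assms(2) unfolding same_tree_def by blast
  obtain r where "r \<in> froots F" "anc F w r"
    using anc_root[OF F anc_in_fverts[OF F w(1)]] .
  with w show ?thesis
    using that anc_trans by metis
qed

lemma fle_dfs_less:
  assumes F: "forest_in V E M F" and "fle F x y" "x \<noteq> y"
  obtains r where "r \<in> froots F" "anc F x r" "anc F y r"
    "fdfs F r \<le> fdfs F y" "fdfs F y < fdfs F x"
proof -
  have st: "same_tree F x y" and le: "fdfs F y \<le> fdfs F x"
    using assms(2) unfolding fle_def by auto
  obtain r where r: "r \<in> froots F" "anc F x r" "anc F y r"
    using same_tree_common_root[OF F st] .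
  have "x \<in> tree_verts F r" "y \<in> tree_verts F r"
    using r unfolding tree_verts_def anc_def by auto
  then have "fdfs F x \<noteq> fdfs F y"
    using forest_in_dfs_inj[OF F r(1)] \<open>x \<noteq> y\<close> unfolding inj_on_def by blast
  moreover have "fdfs F r \<le> fdfs F y"
    using forest_in_dfs_descendant[OF F] r(1,3) anc_in_fverts[OF F r(3)]
    unfolding froots_def descendants_def anc_def by blast
  ultimately show ?thesis
    using r le by (intro that) auto
qed

lemma cascading_seq_shared_vertex_is_root:
  assumes Fs: "\<forall>F\<in>set Fs. forest_in V E M F" and cs: "cascading_seq Fs"
    and k: "Suc k < length Fs" and x: "x \<in> fverts (Fs ! k)"
    and r: "r \<in> froots (Fs ! Suc k)" "anc (Fs ! Suc k) x r"
  shows "x = r"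
proof -
  have "forest_in V E M (Fs ! k)"
    using Fs k by simp
  then obtain r' where r': "r' \<in> froots (Fs ! k)" "anc (Fs ! k) x r'"
    using x by (rule anc_root)
  let ?T = "tree_verts (Fs ! k) r' \<inter> tree_verts (Fs ! Suc k) r"
  have xT: "x \<in> ?T"
    using r r' unfolding tree_verts_def anc_def by auto
  moreover have "cascading_pair (Fs ! k) r' (Fs ! Suc k) r"
    using cs k r(1) r'(1) unfolding cascading_seq_def by blast
  ultimately have "r \<in> tree_verts (Fs ! k) r'" "card ?T = 1"
    unfolding cascading_pair_def by auto
  moreover have "r \<in> tree_verts (Fs ! Suc k) r"
    using r(1) unfolding tree_verts_def anc_def froots_def by auto
  ultimately have "r \<in> ?T" "card ?T = 1"
    by auto
  with xT show ?thesis
    by (metis card_1_singletonE singletonD)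
qed

section \<open>Ranking the vertices of a cascading sequence\<close>

definition first_forest :: "'v rforest list \<Rightarrow> 'v \<Rightarrow> nat" where
  "first_forest Fs x = (LEAST i. i < length Fs \<and> x \<in> fverts (Fs ! i))"

definition seq_rank :: "'v rforest list \<Rightarrow> 'v \<Rightarrow> nat \<times> nat" where
  "seq_rank Fs x = (first_forest Fs x, fdfs (Fs ! first_forest Fs x) x)"

lemma first_forest_bounds:
  assumes cs: "cascading_seq Fs" and k: "k < length Fs" "x \<in> fverts (Fs ! k)"
  shows "x \<in> fverts (Fs ! first_forest Fs x)" "first_forest Fs x \<le> k"
    "k \<le> Suc (first_forest Fs x)"
proof -
  have least: "first_forest Fs x < length Fs" "x \<in> fverts (Fs ! first_forest Fs x)"
    using LeastI[of "\<lambda>i. i < length Fs \<and> x \<in> fverts (Fs ! i)", OF conjI[OF k]]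
    unfolding first_forest_def by auto
  then show "x \<in> fverts (Fs ! first_forest Fs x)" by simp
  show "first_forest Fs x \<le> k"
    unfolding first_forest_def using k by (intro Least_le) simp
  show "k \<le> Suc (first_forest Fs x)"
    using least k cs unfolding cascading_seq_def by (metis disjoint_iff not_less_eq_eq add_2_eq_Suc')
qed

lemma fle_seq_rank_less:
  assumes Fs: "\<forall>F\<in>set Fs. forest_in V E M F" and cs: "cascading_seq Fs"
    and k: "k < length Fs" and xy: "fle (Fs ! k) x y" "x \<noteq> y"
  shows "seq_rank Fs y < seq_rank Fs x"
proof -
  have F: "forest_in V E M (Fs ! k)"
    using Fs k by simp
  obtain r where r: "r \<in> froots (Fs ! k)" "anc (Fs ! k) x r" "anc (Fs ! k) y r"
    and dfs: "fdfs (Fs ! k) r \<le> fdfs (Fs ! k) y" "fdfs (Fs ! k) y < fdfs (Fs ! k) x"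
    using fle_dfs_less[OF F xy] .
  have earlier_is_root: "first_forest Fs v = k - 1 \<and> v = r"
    if v: "v \<in> {x, y}" and later: "first_forest Fs v \<noteq> k" for v
  proof -
    have v: "v \<in> fverts (Fs ! k)" "anc (Fs ! k) v r"
      using v r unfolding anc_def by auto
    note bounds = first_forest_bounds[OF cs k(1) v(1)]
    then obtain i where i: "k = Suc i" "first_forest Fs v = i"
      using later by (cases k) auto
    then show ?thesis
      using cascading_seq_shared_vertex_is_root[OF Fs cs, of i v r] bounds(1) k r(1) v(2) by auto
  qed
  show ?thesis
  proof (cases "first_forest Fs y = k")
    case y: True
    show ?thesis
    proof (cases "first_forest Fs x = k")
      case True
      then show ?thesis
        using y dfs(2) unfolding seq_rank_def by (simp add: less_prod_def)
    next
      case False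
      then have "x = r"
        using earlier_is_root[of x] by blast
      then show ?thesis
        using dfs by simp
    qed
  next
    case False
    then have y: "first_forest Fs y = k - 1" "y = r"
      using earlier_is_root[of y] by blast+
    have "first_forest Fs x = k"
    proof (rule ccontr)
      assume "first_forest Fs x \<noteq> k"
      then have "x = r"
        using earlier_is_root[of x] by blast
      with y xy(2) show False
        by simp
    qed
    moreover have "k - 1 < k"
      using False y(1) by linarith
    ultimately show ?thesis
      using y(1) unfolding seq_rank_def by (simp add: less_prod_def)
  qed
qed

lemma seq_le_seq_rank:
  assumes "\<forall>F\<in>set Fs. forest_in V E M F" "cascading_seq Fs" "seq_le Fs x y"
  shows "x = y \<or> seq_rank Fs y < seq_rank Fs x"
proof -
  have step: "y = z \<or> seq_rank Fs z < seq_rank Fs y" if "\<exists>F\<in>set Fs. fle F y z" for y z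
    using that fle_seq_rank_less[OF assms(1,2)] by (metis in_set_conv_nth)
  from assms(3) show ?thesis
    unfolding seq_le_def
    by (induction rule: tranclp_induct) (use step in \<open>blast dest: order.strict_trans\<close>)+
qed

lemma seq_le_refl:
  assumes "x \<in> seq_verts Fs"
  shows "seq_le Fs x x"
proof -
  obtain F where "F \<in> set Fs" "x \<in> fverts F"
    using assms unfolding seq_verts_def by blast
  then have "\<exists>F\<in>set Fs. fle F x x"
    unfolding fle_def same_tree_def anc_def by auto
  then show ?thesis
    unfolding seq_le_def by blast
qed

lemma seq_le_trans: "seq_le Fs x y \<Longrightarrow> seq_le Fs y z \<Longrightarrow> seq_le Fs x z"
  unfolding seq_le_def by (rule tranclp_trans)

lemma seq_le_antisym:
  assumes "\<forall>F\<in>set Fs. forest_in V E M F" "cascading_seq Fs" "seq_le Fs x y" "seq_le Fs y x"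
  shows "x = y"
  using seq_le_seq_rank[OF assms(1,2,3)] seq_le_seq_rank[OF assms(1,2,4)] by auto

section \<open>Relations along which a rank decreases\<close>

lemma Field_reaches_sink:
  fixes rank :: "'a \<Rightarrow> 'b::wellorder"
  assumes rank: "\<And>u v. (u, v) \<in> R \<Longrightarrow> rank v < rank u" and "x \<in> Field R"
  obtains y where "(x, y) \<in> R\<^sup>*" "y \<in> Field R - Domain R"
proof -
  have "\<exists>y. (x, y) \<in> R\<^sup>* \<and> y \<in> Field R - Domain R"
    using assms(2)
  proof (induction "rank x" arbitrary: x rule: less_induct)
    case less
    show ?case
    proof (cases "x \<in> Domain R")
      case True
      then obtain v where v: "(x, v) \<in> R"
        by blast
      then have "v \<in> Field R" "rank v < rank x"
        using rank by (auto simp: Field_def)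
      then obtain y where "(v, y) \<in> R\<^sup>*" "y \<in> Field R - Domain R"
        using less.hyps by blast
      with v show ?thesis
        by (meson converse_rtrancl_into_rtrancl)
    next
      case False
      with less.prems show ?thesis
        by blast
    qed
  qed
  then obtain y where "(x, y) \<in> R\<^sup>*" "y \<in> Field R - Domain R"
    by blast
  then show ?thesis
    by (rule that)
qed

lemma card_lt_card_Field:
  fixes rank :: "'a \<Rightarrow> 'b::wellorder"
  assumes "finite R" "R \<noteq> {}" "inj_on fst R" and rank: "\<And>u v. (u, v) \<in> R \<Longrightarrow> rank v < rank u"
  shows "card R < card (Field R)"
proof -
  obtain x where "x \<in> Field R"
    using assms(2) by (auto simp: Field_def)
  with rank obtain y where "(x, y) \<in> R\<^sup>*" "y \<in> Field R - Domain R"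
    by (rule Field_reaches_sink)
  then have "Domain R \<subset> Field R"
    unfolding Field_def by blast
  then have "card (Domain R) < card (Field R)"
    by (simp add: assms(1) finite_Field psubset_card_mono)
  moreover have "card (Domain R) = card R"
    using assms(3) by (simp add: Domain_fst card_image)
  ultimately show ?thesis
    by simp
qed

lemma rtrancl_unique_sink:
  fixes rank :: "'a \<Rightarrow> 'b::wellorder"
  assumes rank: "\<And>u v. (u, v) \<in> R \<Longrightarrow> rank v < rank u"
    and "Field R - Domain R = {s}" "x \<in> Field R"
  shows "(x, s) \<in> R\<^sup>*"
proof -
  obtain y where "(x, y) \<in> R\<^sup>*" "y \<in> Field R - Domain R"
    using rank assms(3) by (rule Field_reaches_sink)
  with assms(2) show ?thesis
    by simp
qed

section \<open>Matching edges meeting a vertex set\<close>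

lemma incident_matching_edges_cover:
  assumes sg: "simple_graph V E" and pm: "perfect_matching V E M" and "S \<subseteq> V"
  defines "A \<equiv> {e\<in>M. e \<inter> S \<noteq> {}}"
  shows "S \<subseteq> \<Union>A" "finite (\<Union>A)" "int (card (\<Union>A)) \<le> 2 * (rp M S + 1)"
proof -
  have AE: "A \<subseteq> E"
    using pm unfolding A_def perfect_matching_def by blast
  show "S \<subseteq> \<Union>A"
    using pm \<open>S \<subseteq> V\<close> unfolding A_def perfect_matching_def by blast
  have "\<Union>A \<subseteq> V" "finite V"
    using sg AE unfolding simple_graph_def by blast+
  then show "finite (\<Union>A)"
    by (rule finite_subset)
  have "card (\<Union>A) \<le> sum card A"
    by (rule card_Union_le_sum_card)
  also have "\<dots> = 2 * card A"
    using sg AE unfolding simple_graph_def by (simp add: subset_iff)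
  finally show "int (card (\<Union>A)) \<le> 2 * (rp M S + 1)"
    unfolding rp_def A_def by simp
qed

lemma card_le_twice_rp:
  assumes "simple_graph V E" "perfect_matching V E M" "S \<subseteq> V"
  shows "int (card S) \<le> 2 * (rp M S + 1)"
proof -
  note cover = incident_matching_edges_cover[OF assms]
  have "card S \<le> card (\<Union>{e\<in>M. e \<inter> S \<noteq> {}})"
    using card_mono[OF cover(2,1)] .
  with cover(3) show ?thesis
    by linarith
qed

lemma matching_edge_subset_if_card_eq_twice_rp:
  assumes "simple_graph V E" "perfect_matching V E M" "S \<subseteq> V"
    and "int (card S) = 2 * (rp M S + 1)" "x \<in> S" "e \<in> M" "x \<in> e"
  shows "e \<subseteq> S"
proof -
  note cover = incident_matching_edges_cover[OF assms(1-3)]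
  have "card (\<Union>{e\<in>M. e \<inter> S \<noteq> {}}) \<le> card S"
    using cover(3) assms(4) by linarith
  then have "S = \<Union>{e\<in>M. e \<inter> S \<noteq> {}}"
    using card_mono[OF cover(2,1)] by (intro card_subset_eq[OF cover(2,1)]) linarith
  then show ?thesis
    using assms(5-7) by blast
qed

section \<open>The colour classes P_j\<close>

lemma good_forest_seqD:
  assumes "good_forest_seq V E M col Fs"
  shows "\<forall>F\<in>set Fs. forest_in V E M F" "cascading_seq Fs"
  using assms unfolding good_forest_seq_def by simp_all

lemma seq_verts_subset:
  assumes "\<forall>F\<in>set Fs. forest_in V E M F"
  shows "seq_verts Fs \<subseteq> V"
  using assms forest_in_subset unfolding seq_verts_def by blast

lemma Sj_eq_Field: "Sj M col P j = Field (Pj M col P j)"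
  unfolding Sj_def Uj_def Vj_def Field_def by (simp add: Domain_fst Range_snd)

lemma colour_class_pairs:
  assumes "good_forest_seq V E M col Fs" "good_pairs V E M col Fs P"
  shows "finite (Pj M col P j)" "inj_on fst (Pj M col P j)"
    "Sj M col P j \<subseteq> seq_verts Fs"
    "\<And>u v. (u, v) \<in> Pj M col P j \<Longrightarrow> seq_le Fs u v"
    "\<And>u v. (u, v) \<in> Pj M col P j \<Longrightarrow> seq_rank Fs v < seq_rank Fs u"
proof -
  have sub: "Pj M col P j \<subseteq> P"
    unfolding Pj_def by blast
  note Fs = good_forest_seqD[OF assms(1)]
  have P: "finite P" "inj_on fst P" "\<forall>(u, v)\<in>P. u \<in> seq_verts Fs \<and> v \<in> seq_verts Fs"
    "\<forall>(u, v)\<in>P. seq_less Fs u v"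
    using assms(2) unfolding good_pairs_def by fast+
  show "finite (Pj M col P j)" "inj_on fst (Pj M col P j)"
    using P(1,2) sub by (auto intro: finite_subset inj_on_subset)
  show "Sj M col P j \<subseteq> seq_verts Fs"
    using P(3) sub unfolding Sj_eq_Field Field_def by fastforce
  show "seq_le Fs u v" "seq_rank Fs v < seq_rank Fs u" if "(u, v) \<in> Pj M col P j" for u v
    using that sub P(4) seq_le_seq_rank[OF Fs] unfolding seq_less_def by blast+
qed

lemma card_Pj_lt_card_Sj:
  assumes "good_forest_seq V E M col Fs" "good_pairs V E M col Fs P" "Pj M col P j \<noteq> {}"
  shows "card (Pj M col P j) < card (Sj M col P j)"
  using colour_class_pairs[OF assms(1,2)] assms(3) unfolding Sj_eq_Field
  by (intro card_lt_card_Field[where rank = "seq_rank Fs"]) auto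

lemma high_if_Dj_nonempty:
  assumes "j \<in> matching_colours M col" "finite (Pj M col P j)" "Dj M col P j \<noteq> {}"
    and "(real (card (Pj M col P j)) - 1) / 2 \<le> real_of_int (rp M (Sj M col P j))"
  shows "high M col P j"
proof -
  have "Dj M col P j \<subseteq> Pj M col P j"
    unfolding Dj_def by blast
  then have "finite (Dj M col P j)"
    using assms(2) by (rule finite_subset)
  with assms(3) have "1 \<le> real (card (Dj M col P j))"
    by (simp add: Suc_le_eq card_gt_0_iff)
  with assms(1,4) show ?thesis
    unfolding high_def by simp
qed

lemma low_colour_class_tight:
  assumes "low M col P j" "finite (Pj M col P j)"
    and "card (Pj M col P j) + 1 \<le> card (Sj M col P j)"
    and "int (card (Sj M col P j)) \<le> 2 * (rp M (Sj M col P j) + 1)"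
  shows "Dj M col P j = {}" "card (Sj M col P j) = card (Pj M col P j) + 1"
    "int (card (Sj M col P j)) = 2 * (rp M (Sj M col P j) + 1)"
proof -
  have "Dj M col P j \<subseteq> Pj M col P j"
    unfolding Dj_def by blast
  then have "finite (Dj M col P j)"
    using assms(2) by (rule finite_subset)
  have "\<not> (real (card (Pj M col P j)) - real (card (Dj M col P j))) / 2 \<le>
      real_of_int (rp M (Sj M col P j))"
    using assms(1) unfolding low_def high_def by blast
  then have "real_of_int (2 * rp M (Sj M col P j)) <
      real_of_int (int (card (Pj M col P j)) - int (card (Dj M col P j)))"
    by simp
  then have "2 * rp M (Sj M col P j) + 1 \<le> int (card (Pj M col P j)) - int (card (Dj M col P j))"
    by (simp only: of_int_less_iff zless_imp_add1_zle)
  with assms(3,4) have bounds: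
    "2 * rp M (Sj M col P j) + 1 \<le> int (card (Pj M col P j)) - int (card (Dj M col P j))"
    "int (card (Pj M col P j)) + 1 \<le> int (card (Sj M col P j))"
    "int (card (Sj M col P j)) \<le> 2 * (rp M (Sj M col P j) + 1)"
    "0 \<le> int (card (Dj M col P j))"
    by simp_all
  show "int (card (Sj M col P j)) = 2 * (rp M (Sj M col P j) + 1)"
    using bounds by arith
  show "card (Sj M col P j) = card (Pj M col P j) + 1"
    using bounds by arith
  have "int (card (Dj M col P j)) = 0"
    using bounds by arith
  with \<open>finite (Dj M col P j)\<close> show "Dj M col P j = {}"
    by simp
qed

lemma Sj_unique_max:
  assumes "good_forest_seq V E M col Fs" "good_pairs V E M col Fs P"
    and card: "card (Sj M col P j) = card (Pj M col P j) + 1"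
  shows "\<exists>!vs. vs \<in> Sj M col P j \<and> (\<forall>x\<in>Sj M col P j. seq_le Fs x vs)"
proof -
  let ?R = "Pj M col P j"
  note R = colour_class_pairs[OF assms(1,2), where j = j]
  have "card (Domain ?R) = card ?R"
    using R(2) by (simp add: Domain_fst card_image)
  then have "card (Field ?R - Domain ?R) = 1"
    using card R(1) unfolding Sj_eq_Field
    by (simp add: card_Diff_subset finite_Domain Field_def)
  then obtain vs where vs: "Field ?R - Domain ?R = {vs}"
    by (rule card_1_singletonE)
  have below: "seq_le Fs x vs" if "x \<in> Field ?R" for x
  proof -
    have "(x, vs) \<in> ?R\<^sup>*"
      using R(5) vs that by (rule rtrancl_unique_sink)
    then show ?thesis
    proof (induction rule: converse_rtrancl_induct)
      case base
      show ?case
        using vs R(3) unfolding Sj_eq_Field by (blast intro: seq_le_refl)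
    next
      case (step x y)
      then show ?case
        using R(4) by (blast intro: seq_le_trans)
    qed
  qed
  show ?thesis
  proof (rule ex1I)
    show "vs \<in> Sj M col P j \<and> (\<forall>x\<in>Sj M col P j. seq_le Fs x vs)"
      using vs below unfolding Sj_eq_Field by blast
  next
    fix w
    assume "w \<in> Sj M col P j \<and> (\<forall>x\<in>Sj M col P j. seq_le Fs x w)"
    then show "w = vs"
      using vs below seq_le_antisym[OF good_forest_seqD[OF assms(1)]] unfolding Sj_eq_Field by blast
  qed
qed

lemma low_card_Sj_ge_4:
  assumes sg: "simple_graph V E" and pm: "perfect_matching V E M" and SV: "Sj M col P j \<subseteq> V"
    and "Dj M col P j = {}" "card (Sj M col P j) = card (Pj M col P j) + 1"
    and tight: "int (card (Sj M col P j)) = 2 * (rp M (Sj M col P j) + 1)"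
  shows "4 \<le> card (Sj M col P j)"
proof (rule ccontr)
  assume "\<not> 4 \<le> card (Sj M col P j)"
  with tight assms(5) have card: "card (Pj M col P j) = 1" "card (Sj M col P j) = 2"
    by arith+
  then obtain u v where uv: "Pj M col P j = {(u, v)}"
    by (auto simp: card_1_singleton_iff)
  then have S: "Sj M col P j = {u, v}"
    unfolding Sj_eq_Field by (auto simp: Field_def)
  obtain e where e: "e \<in> M" "u \<in> e"
    using pm SV unfolding S perfect_matching_def by blast
  have "e \<subseteq> {u, v}"
    using matching_edge_subset_if_card_eq_twice_rp[OF sg pm SV tight, of u e] e S by simp
  moreover have "card e = 2"
    using sg pm e(1) unfolding simple_graph_def perfect_matching_def by blast
  ultimately have "e = {u, v}"
    using card(2) unfolding S by (intro card_subset_eq) simp_all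
  then have "(u, v) \<in> Dj M col P j"
    using e(1) uv unfolding Dj_def by simp
  with assms(4) show False
    by simp
qed

theorem lemma8:
  fixes V :: "'v set" and E M :: "'v set set" and col :: "'v set \<Rightarrow> nat"
    and Fs :: "'v rforest list" and P :: "('v \<times> 'v) set"
  assumes "simple_graph V E"
    and "perfect_matching V E M"
    and "optimal_2_colouring V E col"
    and "good_forest_seq V E M col Fs"
    and "good_pairs V E M col Fs P"
  shows "\<forall>j\<in>matching_colours M col. Pj M col P j \<noteq> {} \<longrightarrow>
           card (Sj M col P j) \<ge> card (Pj M col P j) + 1 \<and>
           real_of_int (rp M (Sj M col P j)) \<ge> (real (card (Pj M col P j)) - 1) / 2 \<and>
           (Dj M col P j \<noteq> {} \<longrightarrow> high M col P j) \<and>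
           (low M col P j \<longrightarrow>
              (\<forall>x\<in>Sj M col P j. \<forall>e\<in>M. x \<in> e \<longrightarrow> e \<subseteq> Sj M col P j) \<and>
              (\<exists>!vs. vs \<in> Sj M col P j \<and> (\<forall>x\<in>Sj M col P j. seq_le Fs x vs))) \<and>
           (low M col P j \<longrightarrow> card (Sj M col P j) \<ge> 4)"
proof (intro ballI impI conjI)
  fix j
  assume j: "j \<in> matching_colours M col" and ne: "Pj M col P j \<noteq> {}"
  let ?P = "Pj M col P j" and ?S = "Sj M col P j"
  have fin: "finite ?P" and SV: "?S \<subseteq> V"
    using colour_class_pairs(1,3)[OF assms(4,5)]
      seq_verts_subset[OF good_forest_seqD(1)[OF assms(4)]] by blast+
  show a: "card ?P + 1 \<le> card ?S"
    using card_Pj_lt_card_Sj[OF assms(4,5) ne] by simp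
  have rp: "int (card ?S) \<le> 2 * (rp M ?S + 1)"
    using assms(1,2) SV by (rule card_le_twice_rp)
  with a have "real_of_int (int (card ?P) - 1) \<le> real_of_int (2 * rp M ?S)"
    unfolding of_int_le_iff by arith
  then show b: "(real (card ?P) - 1) / 2 \<le> real_of_int (rp M ?S)"
    by simp
  show "high M col P j" if "Dj M col P j \<noteq> {}"
    using j fin that b by (rule high_if_Dj_nonempty)
  note tight = low_colour_class_tight[OF _ fin a rp]
  show "e \<subseteq> ?S" if "low M col P j" "x \<in> ?S" "e \<in> M" "x \<in> e" for x e
    using matching_edge_subset_if_card_eq_twice_rp[OF assms(1,2) SV] tight that by blast
  show "\<exists>!vs. vs \<in> ?S \<and> (\<forall>x\<in>?S. seq_le Fs x vs)" if "low M col P j"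
    using Sj_unique_max[OF assms(4,5)] tight[OF that] by blast
  show "4 \<le> card ?S" if "low M col P j"
    using low_card_Sj_ge_4[OF assms(1,2) SV] tight[OF that] by blast
qed

end
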